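(* If $\alpha$ is irrational with partial quotients bounded in average, then $|A_\alpha\cap[n]|\gg\sqrt{n/\log n}$ as $n\to\infty$ (implicit constant depending on $\alpha$).
   Context: $[n]=\{1,\dots,n\}$; $\{x\}$ is the fractional part of $x$. For irrational $\alpha$ and $k\ge1$, $B_\alpha(k)=|\{1\le q\le k:\{q\alpha\}\le\{k\alpha\}\}|$, and $A_\alpha=\{B_\alpha(k):k\ge1\}$. If $\alpha=[a_0;a_1,a_2,\dots]$, its partial quotients are bounded in average if there is $B$ with $a_1+\dots+a_m\le Bm$ for all $m\ge1$. *)

theory Defs
  imports "HOL-Analysis.Analysis"
begin

fun cf_rem :: "real \<Rightarrow> nat \<Rightarrow> real" where
  "cf_rem \<alpha> 0 = \<alpha>"
| "cf_rem \<alpha> (Suc n) = 1 / frac (cf_rem \<alpha> n)"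

definition cf_pq :: "real \<Rightarrow> nat \<Rightarrow> int" where
  "cf_pq \<alpha> n = \<lfloor>cf_rem \<alpha> n\<rfloor>"

definition pq_bounded_in_average :: "real \<Rightarrow> bool" where
  "pq_bounded_in_average \<alpha> \<longleftrightarrow>
     (\<exists>B::real. \<forall>m\<ge>1. real_of_int (\<Sum>i=1..m. cf_pq \<alpha> i) \<le> B * real m)"

definition B_alpha :: "real \<Rightarrow> nat \<Rightarrow> nat" where
  "B_alpha \<alpha> k = card {q \<in> {1..k}. frac (real q * \<alpha>) \<le> frac (real k * \<alpha>)}"

definition A_alpha :: "real \<Rightarrow> nat set" where
  "A_alpha \<alpha> = {B_alpha \<alpha> k | k. k \<ge> 1}"

end

theory Submission
  imports Defs
begin

text \<open>
  If \<open>k < k'\<close> have \<open>B_alpha k = B_alpha k'\<close>, then \<open>{k' \<alpha>} < {k \<alpha>}\<close>: otherwise \<open>k'\<close> and everything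
  counted by \<open>B_alpha k\<close> would be counted by \<open>B_alpha k'\<close>. The drop \<open>{k \<alpha>} - {k' \<alpha>}\<close> is the
  distance of \<open>(k' - k) \<alpha>\<close> to an integer, which the convergents bound below by \<open>1 / (d (a\<^sub>m + 2))\<close>
  for \<open>d = k' - k\<close> and \<open>q\<^sub>m\<^sub>-\<^sub>1 \<le> d < q\<^sub>m\<close>. As \<open>q\<^sub>m\<close> grows exponentially, \<open>m = O(log n)\<close> for
  \<open>d \<le> n\<close>, so bounded averages give \<open>a\<^sub>m = O(log n)\<close>. By Cauchy-Schwarz over the consecutive drops
  along a fibre of \<open>B_alpha\<close> in \<open>[n]\<close>, the fibre has \<open>O(sqrt (n log n))\<close> elements; hence \<open>B_alpha\<close>
  takes at least a constant times \<open>sqrt (n / log n)\<close> distinct values on \<open>[n]\<close>, all of them in \<open>A_alpha \<inter> [n]\<close>.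
\<close>

text \<open>Index shift: \<open>cf_num a n / cf_den a n\<close> is the convergent \<open>p\<^sub>n\<^sub>-\<^sub>1 / q\<^sub>n\<^sub>-\<^sub>1\<close>,
  starting from \<open>p\<^sub>-\<^sub>1 / q\<^sub>-\<^sub>1 = 1 / 0\<close>.\<close>

fun cf_den :: "real \<Rightarrow> nat \<Rightarrow> int" where
  "cf_den a 0 = 0"
| "cf_den a (Suc 0) = 1"
| "cf_den a (Suc (Suc n)) = cf_pq a (Suc n) * cf_den a (Suc n) + cf_den a n"

fun cf_num :: "real \<Rightarrow> nat \<Rightarrow> int" where
  "cf_num a 0 = 1"
| "cf_num a (Suc 0) = cf_pq a 0"
| "cf_num a (Suc (Suc n)) = cf_pq a (Suc n) * cf_num a (Suc n) + cf_num a n"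

definition cf_err :: "real \<Rightarrow> nat \<Rightarrow> real" where
  "cf_err a n = of_int (cf_den a n) * a - of_int (cf_num a n)"

lemma cf_rem_not_Rats:
  assumes "a \<notin> \<rat>"
  shows "cf_rem a n \<notin> \<rat>"
proof (induction n)
  case 0
  then show ?case using assms by simp
next
  case (Suc n)
  show ?case
  proof
    assume "cf_rem a (Suc n) \<in> \<rat>"
    then have "frac (cf_rem a n) \<in> \<rat>"
      by (metis Rats_1 Rats_divide cf_rem.simps(2) divide_divide_eq_right div_by_1 divide_self_if mult_1)
    then have "cf_rem a n \<in> \<rat>"
      by (metis Rats_add Rats_of_int frac_def diff_add_cancel)
    with Suc show False by simp
  qed
qed

lemma frac_cf_rem_pos:
  assumes "a \<notin> \<rat>"
  shows "frac (cf_rem a n) > 0"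
proof -
  have "cf_rem a n \<notin> \<int>"
    using cf_rem_not_Rats[OF assms] Ints_subset_Rats by blast
  then show ?thesis
    using frac_ge_0[of "cf_rem a n"] frac_eq_0_iff by fastforce
qed

lemma frac_cf_rem_mult_cf_rem_Suc:
  assumes "a \<notin> \<rat>"
  shows "frac (cf_rem a n) * cf_rem a (Suc n) = 1"
  using frac_cf_rem_pos[OF assms, of n] by simp

lemma cf_rem_Suc_gt_1:
  assumes "a \<notin> \<rat>"
  shows "cf_rem a (Suc n) > 1"
  using frac_cf_rem_pos[OF assms, of n] frac_lt_1[of "cf_rem a n"] by simp

lemma cf_pq_Suc_ge_1:
  assumes "a \<notin> \<rat>"
  shows "cf_pq a (Suc n) \<ge> 1"
  using cf_rem_Suc_gt_1[OF assms, of n] unfolding cf_pq_def by linarith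

lemma cf_err_Suc:
  assumes "a \<notin> \<rat>"
  shows "cf_err a (Suc n) = - frac (cf_rem a n) * cf_err a n"
proof (induction n)
  case 0
  then show ?case by (simp add: cf_err_def cf_pq_def frac_def)
next
  case (Suc n)
  have "cf_err a n = - cf_rem a (Suc n) * cf_err a (Suc n)"
    using Suc frac_cf_rem_mult_cf_rem_Suc[OF assms, of n] by (simp add: algebra_simps)
  then have "cf_err a (Suc (Suc n)) = (cf_pq a (Suc n) - cf_rem a (Suc n)) * cf_err a (Suc n)"
    by (simp add: cf_err_def algebra_simps)
  then show ?case by (simp add: frac_def cf_pq_def)
qed

lemma cf_num_den_det: "cf_num a (Suc n) * cf_den a n - cf_num a n * cf_den a (Suc n) = (-1) ^ Suc n"
  by (induction n) (simp_all add: algebra_simps)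

lemma cf_den_nonneg_le_Suc:
  assumes "a \<notin> \<rat>"
  shows "0 \<le> cf_den a n \<and> cf_den a n \<le> cf_den a (Suc n)"
proof (induction n)
  case 0
  then show ?case by simp
next
  case (Suc n)
  then have "cf_den a (Suc n) \<le> cf_pq a (Suc n) * cf_den a (Suc n)"
    using cf_pq_Suc_ge_1[OF assms, of n] by (simp add: mult_le_cancel_right1)
  then show ?case using Suc by simp
qed

lemma cf_den_Suc_ge_1:
  assumes "a \<notin> \<rat>"
  shows "cf_den a (Suc n) \<ge> 1"
proof (induction n)
  case 0
  then show ?case by simp
next
  case (Suc n)
  then show ?case using cf_den_nonneg_le_Suc[OF assms, of "Suc n"] by linarith
qed

lemma cf_den_Suc_Suc_ge:
  assumes "a \<notin> \<rat>"
  shows "cf_den a (Suc (Suc n)) \<ge> cf_den a (Suc n) + cf_den a n"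
  using cf_pq_Suc_ge_1[OF assms, of n] cf_den_nonneg_le_Suc[OF assms, of "Suc n"]
  by (simp add: mult_le_cancel_right1)

lemma cf_den_ge_power_2:
  assumes "a \<notin> \<rat>" and "m \<ge> 1"
  shows "2 ^ ((m - 1) div 2) \<le> cf_den a m"
proof -
  have "2 ^ k \<le> cf_den a (2*k+1) \<and> 2 ^ k \<le> cf_den a (2*k+2)" for k
  proof (induction k)
    case 0
    then show ?case using cf_den_Suc_ge_1[OF assms(1), of 1] by simp
  next
    case (Suc k)
    have "cf_den a (2*k+3) \<ge> cf_den a (2*k+2) + cf_den a (2*k+1)"
      and "cf_den a (2*k+4) \<ge> cf_den a (2*k+3) + cf_den a (2*k+2)"
      and "cf_den a (2*k+2) \<le> cf_den a (2*k+3)"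
      using cf_den_Suc_Suc_ge[OF assms(1), of "2*k+1"] cf_den_Suc_Suc_ge[OF assms(1), of "2*k+2"]
        cf_den_nonneg_le_Suc[OF assms(1), of "2*k+2"]
      by (simp_all add: numeral_eq_Suc del: cf_den.simps)
    moreover have idx: "2 * Suc k + 1 = 2 * k + 3" "2 * Suc k + 2 = 2 * k + 4"
      by simp_all
    ultimately show ?case using Suc by (simp only: idx power_Suc) linarith
  qed
  moreover have "m = 2 * ((m - 1) div 2) + 1 \<or> m = 2 * ((m - 1) div 2) + 2"
    using assms(2) by auto
  ultimately show ?thesis by metis
qed

lemma abs_cf_err_Suc_eq:
  assumes irr: "a \<notin> \<rat>"
  shows "\<bar>cf_err a (Suc n)\<bar> * (of_int (cf_den a (Suc n)) * cf_rem a (Suc n) + of_int (cf_den a n)) = 1"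
proof -
  let ?D = "of_int (cf_den a (Suc n)) * cf_rem a (Suc n) + of_int (cf_den a n)"
  have cross: "of_int (cf_den a n) * cf_err a (Suc n) - of_int (cf_den a (Suc n)) * cf_err a n
      = - of_int (cf_num a (Suc n) * cf_den a n - cf_num a n * cf_den a (Suc n))"
    by (simp add: cf_err_def algebra_simps)
  have "cf_err a n = - cf_rem a (Suc n) * cf_err a (Suc n)"
    using cf_err_Suc[OF irr, of n] frac_cf_rem_mult_cf_rem_Suc[OF irr, of n] by (simp add: algebra_simps)
  with cross have "cf_err a (Suc n) * ?D = - of_int (cf_num a (Suc n) * cf_den a n - cf_num a n * cf_den a (Suc n))"
    by (simp add: algebra_simps)
  then have "\<bar>cf_err a (Suc n) * ?D\<bar> = 1"
    unfolding cf_num_den_det by simp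
  moreover have "?D \<ge> 0"
    using cf_den_nonneg_le_Suc[OF irr, of n] cf_den_Suc_ge_1[OF irr, of n] cf_rem_Suc_gt_1[OF irr, of n]
    by simp
  ultimately show ?thesis by (simp add: abs_mult)
qed

lemma abs_cf_err_Suc_ge:
  assumes irr: "a \<notin> \<rat>"
  shows "\<bar>cf_err a (Suc n)\<bar> \<ge> 1 / (of_int (cf_den a (Suc n)) * (of_int (cf_pq a (Suc n)) + 2))"
proof -
  let ?D = "of_int (cf_den a (Suc n)) * cf_rem a (Suc n) + of_int (cf_den a n)"
  have q: "of_int (cf_den a n) \<le> (of_int (cf_den a (Suc n)) :: real)" "of_int (cf_den a (Suc n)) \<ge> (1::real)"
    using cf_den_nonneg_le_Suc[OF irr, of n] cf_den_Suc_ge_1[OF irr, of n] by simp_all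
  have "cf_rem a (Suc n) < of_int (cf_pq a (Suc n)) + 1"
    unfolding cf_pq_def by linarith
  then have "of_int (cf_den a (Suc n)) * cf_rem a (Suc n) \<le> of_int (cf_den a (Suc n)) * (of_int (cf_pq a (Suc n)) + 1)"
    using q by (intro mult_left_mono) auto
  then have "?D \<le> of_int (cf_den a (Suc n)) * (of_int (cf_pq a (Suc n)) + 2)"
    using q by (simp add: algebra_simps)
  moreover have "?D > 0"
    using q cf_rem_Suc_gt_1[OF irr, of n] cf_den_nonneg_le_Suc[OF irr, of n]
    by (smt (verit) mult_le_cancel_left1 of_int_0_le_iff)
  ultimately have "1 / (of_int (cf_den a (Suc n)) * (of_int (cf_pq a (Suc n)) + 2)) \<le> 1 / ?D"
    by (intro divide_left_mono) auto
  also have "1 / ?D = \<bar>cf_err a (Suc n)\<bar>"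
    using abs_cf_err_Suc_eq[OF irr, of n] \<open>?D > 0\<close> by (simp add: field_simps)
  finally show ?thesis .
qed

text \<open>Best approximation: \<open>(d, p)\<close> has integer coordinates \<open>(u, v)\<close> in the unimodular basis
  of the two consecutive convergents, and \<open>d < q\<^sub>n\<^sub>+\<^sub>1\<close> forces \<open>u\<close> and \<open>v\<close> to have opposite signs
  (or \<open>v = 0\<close>), while the two errors also have opposite signs.\<close>

lemma abs_mult_sub_int_ge_cf_err:
  assumes irr: "a \<notin> \<rat>" and d: "1 \<le> d" "d < cf_den a (Suc (Suc n))"
  shows "\<bar>of_int d * a - of_int p\<bar> \<ge> \<bar>cf_err a (Suc n)\<bar>"
proof -
  define s where "s = cf_num a (Suc (Suc n)) * cf_den a (Suc n) - cf_num a (Suc n) * cf_den a (Suc (Suc n))"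
  have s2: "s * s = 1"
    unfolding s_def cf_num_den_det[of a "Suc n"] by (simp add: power_mult_distrib[symmetric])
  define u where "u = s * (d * cf_num a (Suc (Suc n)) - p * cf_den a (Suc (Suc n)))"
  define v where "v = s * (p * cf_den a (Suc n) - d * cf_num a (Suc n))"
  have "u * cf_den a (Suc n) + v * cf_den a (Suc (Suc n)) = s * s * d"
    and "u * cf_num a (Suc n) + v * cf_num a (Suc (Suc n)) = s * s * p"
    unfolding u_def v_def s_def by (simp_all add: algebra_simps)
  then have du: "d = u * cf_den a (Suc n) + v * cf_den a (Suc (Suc n))"
    and pu: "p = u * cf_num a (Suc n) + v * cf_num a (Suc (Suc n))"
    using s2 by simp_all
  define f where "f = frac (cf_rem a (Suc n))"
  have f: "0 < f" "f < 1"
    unfolding f_def by (rule frac_cf_rem_pos[OF irr]) (rule frac_lt_1)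
  have "of_int d * a - of_int p = of_int u * cf_err a (Suc n) + of_int v * cf_err a (Suc (Suc n))"
    by (simp add: du pu cf_err_def algebra_simps)
  also have "\<dots> = cf_err a (Suc n) * (of_int u - of_int v * f)"
    using cf_err_Suc[OF irr, of "Suc n"] unfolding f_def by (simp add: algebra_simps)
  finally have eq: "of_int d * a - of_int p = cf_err a (Suc n) * (of_int u - of_int v * f)" .
  have Q1: "cf_den a (Suc n) \<ge> 1" and Q2: "cf_den a (Suc (Suc n)) \<ge> 1"
    using cf_den_Suc_ge_1[OF irr] by blast+
  consider "v = 0" | "v > 0" | "v < 0" by linarith
  then have "\<bar>of_int u - of_int v * f\<bar> \<ge> 1"
  proof cases
    case 1
    then have "u \<noteq> 0" using du d by auto
    then show ?thesis using 1 by simp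
  next
    case 2
    then have "v * cf_den a (Suc (Suc n)) \<ge> cf_den a (Suc (Suc n))" using Q2 by simp
    then have "u * cf_den a (Suc n) < 0" using du d by linarith
    then have "u \<le> -1" using Q1 by (simp add: mult_less_0_iff)
    moreover have "of_int v * f \<ge> 0" using 2 f by simp
    ultimately show ?thesis by linarith
  next
    case 3
    then have "v * cf_den a (Suc (Suc n)) < 0" using Q2 by (simp add: mult_neg_pos)
    then have "u * cf_den a (Suc n) > 0" using du d by linarith
    then have "u \<ge> 1" using Q1 by (simp add: zero_less_mult_iff)
    moreover have "of_int v * f \<le> 0" using 3 f by (simp add: mult_nonpos_nonneg)
    ultimately show ?thesis by linarith
  qed
  then have "\<bar>cf_err a (Suc n)\<bar> * 1 \<le> \<bar>cf_err a (Suc n)\<bar> * \<bar>of_int u - of_int v * f\<bar>"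
    by (intro mult_left_mono) auto
  then show ?thesis unfolding eq abs_mult by simp
qed

lemma abs_mult_sub_int_ge_cf_pq:
  assumes irr: "a \<notin> \<rat>" and d: "1 \<le> d"
  shows "\<exists>m\<ge>1. cf_den a m \<le> d \<and>
           1 / (of_int d * (of_int (cf_pq a m) + 2)) \<le> \<bar>of_int d * a - of_int p\<bar>"
proof -
  have "int (nat d) < int (2 ^ nat d)"
    by (simp only: of_nat_less_iff less_exp)
  then have "d < 2 ^ nat d"
    using d by simp
  also have "\<dots> \<le> cf_den a (Suc (2 * nat d))"
    using cf_den_ge_power_2[OF irr, of "Suc (2 * nat d)"] by simp
  finally have "d < cf_den a (Suc (2 * nat d))" .
  moreover have "\<not> d < cf_den a (Suc 0)"
    using d by simp
  ultimately obtain n where n1: "cf_den a (Suc n) \<le> d" and n2: "d < cf_den a (Suc (Suc n))"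
    using ex_least_nat_less[of "\<lambda>j. d < cf_den a (Suc j)"] by (meson linorder_not_less order_refl)
  have pos: "0 < of_int (cf_den a (Suc n)) * (of_int (cf_pq a (Suc n)) + (2::real))"
    using cf_pq_Suc_ge_1[OF irr, of n] cf_den_Suc_ge_1[OF irr, of n] by simp
  have "of_int (cf_den a (Suc n)) * (of_int (cf_pq a (Suc n)) + 2) \<le> of_int d * (of_int (cf_pq a (Suc n)) + (2::real))"
    using n1 cf_pq_Suc_ge_1[OF irr, of n] by (intro mult_right_mono) auto
  then have "1 / (of_int d * (of_int (cf_pq a (Suc n)) + 2))
      \<le> 1 / (of_int (cf_den a (Suc n)) * (of_int (cf_pq a (Suc n)) + (2::real)))"
    using pos d cf_pq_Suc_ge_1[OF irr, of n] cf_den_Suc_ge_1[OF irr, of n]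
    by (intro divide_left_mono mult_pos_pos) auto
  also have "\<dots> \<le> \<bar>cf_err a (Suc n)\<bar>"
    by (rule abs_cf_err_Suc_ge[OF irr])
  also have "\<dots> \<le> \<bar>of_int d * a - of_int p\<bar>"
    by (rule abs_mult_sub_int_ge_cf_err[OF irr d n2])
  finally show ?thesis
    using n1 by (intro exI[of _ "Suc n"]) auto
qed

lemma ln_ge_1_of_ge_3:
  assumes "n \<ge> 3"
  shows "ln (real n) \<ge> 1"
proof -
  have "ln (272/100) \<le> ln (real n)"
    using assms by (intro ln_mono) auto
  then show ?thesis
    using ln_272_gt_1 by linarith
qed

lemma cf_pq_le_sum_cf_pq:
  assumes irr: "a \<notin> \<rat>" and m: "m \<ge> 1"
  shows "cf_pq a m \<le> (\<Sum>i=1..m. cf_pq a i)"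
proof (rule member_le_sum)
  show "m \<in> {1..m}"
    using m by simp
  fix i
  assume "i \<in> {1..m} - {m}"
  then obtain j where "i = Suc j"
    by (cases i) auto
  then show "0 \<le> cf_pq a i"
    using cf_pq_Suc_ge_1[OF irr, of j] by simp
qed simp

lemma cf_den_le_imp_index_le_ln:
  assumes irr: "a \<notin> \<rat>" and m: "m \<ge> 1" and n: "n \<ge> 3" and den: "cf_den a m \<le> int n"
  shows "real m \<le> 5 * ln (real n)"
proof -
  define k where "k = (m - 1) div 2"
  have "(2::int) ^ k \<le> int n"
    using cf_den_ge_power_2[OF irr m] den unfolding k_def by linarith
  then have "(2::real) ^ k \<le> real n"
    by (metis of_int_le_iff of_int_numeral of_int_power of_int_of_nat_eq)
  then have "real k \<le> log 2 (real n)"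
    by (intro le_log_of_power) auto
  also have "\<dots> = ln (real n) / ln 2"
    by (simp add: log_def)
  also have "\<dots> \<le> ln (real n) / (2/3)"
    using n ln2_ge_two_thirds by (intro divide_left_mono) auto
  finally have "real k \<le> 3/2 * ln (real n)"
    by simp
  moreover have "real m \<le> 2 * real k + 2"
    unfolding k_def using m by linarith
  ultimately show ?thesis
    using ln_ge_1_of_ge_3[OF n] by linarith
qed

lemma pq_bounded_in_average_imp_approx_lower_bound:
  assumes irr: "a \<notin> \<rat>" and avg: "pq_bounded_in_average a"
  shows "\<exists>K>0. \<forall>n d p. 3 \<le> n \<longrightarrow> 1 \<le> d \<longrightarrow> d \<le> n \<longrightarrow>
           1 / (K * real d * ln (real n)) \<le> \<bar>real d * a - of_int p\<bar>"
proof -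
  obtain B where B: "\<And>m. m \<ge> 1 \<Longrightarrow> real_of_int (\<Sum>i=1..m. cf_pq a i) \<le> B * real m"
    using avg unfolding pq_bounded_in_average_def by blast
  have pq_le: "real_of_int (cf_pq a m) \<le> B * real m" if "m \<ge> 1" for m
    using cf_pq_le_sum_cf_pq[OF irr that] B[OF that] by linarith
  have B1: "B \<ge> 1"
    using pq_le[of 1] cf_pq_Suc_ge_1[OF irr, of 0] by simp
  define K where "K = 5 * B + 2"
  have "K > 0"
    using B1 unfolding K_def by simp
  moreover have "1 / (K * real d * ln (real n)) \<le> \<bar>real d * a - of_int p\<bar>"
    if n: "3 \<le> n" and d: "1 \<le> d" "d \<le> n" for n d :: nat and p
  proof -
    obtain m where m: "m \<ge> 1" "cf_den a m \<le> int d"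
      and approx: "1 / (real d * (of_int (cf_pq a m) + 2)) \<le> \<bar>real d * a - of_int p\<bar>"
      using abs_mult_sub_int_ge_cf_pq[OF irr, of "int d" p] d by auto
    have "real m \<le> 5 * ln (real n)"
      using cf_den_le_imp_index_le_ln[OF irr m(1) n] m(2) d by linarith
    then have "B * real m \<le> B * (5 * ln (real n))"
      using B1 by (intro mult_left_mono) auto
    then have "of_int (cf_pq a m) + 2 \<le> K * ln (real n)"
      using pq_le[OF m(1)] ln_ge_1_of_ge_3[OF n] unfolding K_def by (simp add: algebra_simps)
    moreover have "of_int (cf_pq a m) + 2 > (0::real)"
      using m(1) cf_pq_Suc_ge_1[OF irr, of "m - 1"] by simp
    moreover have "real d \<ge> 1"
      using d by simp
    moreover have "0 < ln (real n)"
      using ln_ge_1_of_ge_3[OF n] by simp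
    ultimately have "1 / (real d * (K * ln (real n))) \<le> 1 / (real d * (of_int (cf_pq a m) + 2))"
      using \<open>K > 0\<close> by (intro divide_left_mono mult_left_mono mult_pos_pos) auto
    with approx show ?thesis
      by (simp add: mult.assoc mult.left_commute)
  qed
  ultimately show ?thesis
    by blast
qed

text \<open>AM-GM gives \<open>D e + d E \<ge> 2 sqrt (D E e d) \<ge> 2 c x\<close>.\<close>

lemma chain_card_bound_step:
  fixes c D E d e x :: real
  assumes c: "c > 0" and "D \<ge> 0" "E \<ge> 0" "d > 0" and step: "c \<le> e * d"
    and chain: "c * x\<^sup>2 \<le> D * E" and "x \<ge> 0"
  shows "c * (x + 1)\<^sup>2 \<le> (D + d) * (E + e)"
proof -
  have "e \<ge> 0"
  proof (rule ccontr)
    assume "\<not> e \<ge> 0"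
    then have "e * d < 0"
      using \<open>d > 0\<close> by (simp add: mult_neg_pos)
    with c step show False
      by linarith
  qed
  have "(2 * c * x)\<^sup>2 = 4 * (c * x\<^sup>2) * c"
    by algebra
  also have "\<dots> \<le> 4 * (D * E) * (e * d)"
  proof -
    have "(c * x\<^sup>2) * c \<le> (D * E) * (e * d)"
      using chain step by (rule mult_mono) (use assms in simp_all)
    then show ?thesis
      by linarith
  qed
  also have "\<dots> \<le> (D * e - d * E)\<^sup>2 + 4 * (D * E) * (e * d)"
    by simp
  also have "\<dots> = (D * e + d * E)\<^sup>2"
    by algebra
  finally have "2 * c * x \<le> D * e + d * E"
  proof (rule power2_le_imp_le)
    show "0 \<le> D * e + d * E"
      using assms \<open>e \<ge> 0\<close> by simp
  qed
  moreover have "c * (x + 1)\<^sup>2 = c * x\<^sup>2 + 2 * c * x + c"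
    by algebra
  moreover have "(D + d) * (E + e) = D * E + (D * e + d * E) + e * d"
    by algebra
  ultimately show ?thesis
    using chain step by linarith
qed

lemma chain_card_bound:
  fixes y :: "nat \<Rightarrow> real"
  assumes "finite F" "F \<noteq> {}" "c > 0"
    and "\<And>k k'. k \<in> F \<Longrightarrow> k' \<in> F \<Longrightarrow> k < k' \<Longrightarrow> c / real (k' - k) \<le> y k - y k'"
  shows "c * (real (card F) - 1)\<^sup>2 \<le> real (Max F - Min F) * (y (Min F) - y (Max F))"
  using assms(1,2,4)
proof (induction F rule: finite_linorder_max_induct)
  case empty
  then show ?case by simp
next
  case (insert b A)
  show ?case
  proof (cases "A = {}")
    case True
    then show ?thesis by simp
  next
    case False
    have gap: "c / real (k' - k) \<le> y k - y k'" if "k \<in> insert b A" "k' \<in> insert b A" "k < k'" for k k'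
      using insert.prems(2) that .
    have IH: "c * (real (card A) - 1)\<^sup>2 \<le> real (Max A - Min A) * (y (Min A) - y (Max A))"
      using insert.IH False gap by blast
    have A: "Max A \<in> A" "Min A \<in> A" "Min A \<le> Max A" "Max A < b"
      using insert.hyps False by auto
    have drop: "0 \<le> y (Min A) - y (Max A)"
    proof (cases "Min A < Max A")
      case True
      have "0 \<le> c / real (Max A - Min A)"
        using \<open>c > 0\<close> by simp
      also have "\<dots> \<le> y (Min A) - y (Max A)"
        using gap A True by blast
      finally show ?thesis .
    qed (use A in simp)
    have "c / real (b - Max A) \<le> y (Max A) - y b"
      using gap A by blast
    then have "c \<le> (y (Max A) - y b) * real (b - Max A)"
      using A by (simp add: divide_le_eq)
    then have "c * ((real (card A) - 1) + 1)\<^sup>2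
        \<le> (real (Max A - Min A) + real (b - Max A)) * ((y (Min A) - y (Max A)) + (y (Max A) - y b))"
      using A IH drop insert.hyps(1) False \<open>c > 0\<close>
      by (intro chain_card_bound_step) (auto simp: Suc_le_eq card_gt_0_iff)
    moreover have "Max (insert b A) = b" "Min (insert b A) = Min A"
      using insert.hyps(1) False A by (simp_all add: Max_insert Min_insert)
    moreover have "card (insert b A) = Suc (card A)"
      using insert.hyps by auto
    moreover have "real (b - Min A) = real (Max A - Min A) + real (b - Max A)"
      using A by simp
    ultimately show ?thesis
      by simp
  qed
qed

lemma B_alpha_bounds:
  assumes "k \<ge> 1"
  shows "B_alpha a k \<in> {1..k}"
proof -
  let ?S = "{q \<in> {1..k}. frac (real q * a) \<le> frac (real k * a)}"
  have "finite ?S" and "k \<in> ?S"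
    using assms by simp_all
  then have "card ?S > 0"
    using card_gt_0_iff by blast
  moreover have "card ?S \<le> card {1..k}"
    by (intro card_mono) auto
  ultimately show ?thesis
    unfolding B_alpha_def by simp
qed

lemma B_alpha_less:
  assumes "1 \<le> k" "k < k'" "frac (real k * a) \<le> frac (real k' * a)"
  shows "B_alpha a k < B_alpha a k'"
proof -
  let ?S = "{q \<in> {1..k}. frac (real q * a) \<le> frac (real k * a)}"
  let ?S' = "{q \<in> {1..k'}. frac (real q * a) \<le> frac (real k' * a)}"
  have "insert k' ?S \<subseteq> ?S'"
    using assms by auto
  then have "card (insert k' ?S) \<le> card ?S'"
    by (intro card_mono) auto
  moreover have "k' \<notin> ?S"
    using assms by auto
  ultimately show ?thesis
    unfolding B_alpha_def by simp
qed

lemma card_B_alpha_fibre_le: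
  assumes c: "c > 0"
    and approx: "\<And>d p. 1 \<le> d \<Longrightarrow> d \<le> n \<Longrightarrow> c / real d \<le> \<bar>real d * a - of_int p\<bar>"
  shows "real (card {k \<in> {1..n}. B_alpha a k = v}) \<le> 1 + sqrt (real n / c)"
proof (cases "{k \<in> {1..n}. B_alpha a k = v} = {}")
  case True
  show ?thesis
    unfolding True using c by simp
next
  case False
  define F where "F = {k \<in> {1..n}. B_alpha a k = v}"
  define y where "y k = frac (real k * a)" for k :: nat
  have gap: "c / real (k' - k) \<le> y k - y k'" if "k \<in> F" "k' \<in> F" "k < k'" for k k'
  proof -
    define p where "p = \<lfloor>real k' * a\<rfloor> - \<lfloor>real k * a\<rfloor>"
    have "\<not> y k \<le> y k'"
      using B_alpha_less[of k k' a] that unfolding F_def y_def by auto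
    moreover have "y k - y k' = - (real (k' - k) * a - of_int p)"
      unfolding y_def frac_def p_def using that by (simp add: of_nat_diff algebra_simps)
    ultimately have "y k - y k' = \<bar>real (k' - k) * a - of_int p\<bar>"
      by linarith
    moreover have "c / real (k' - k) \<le> \<bar>real (k' - k) * a - of_int p\<bar>"
      using that unfolding F_def by (intro approx) auto
    ultimately show ?thesis
      by simp
  qed
  have F: "finite F" "F \<noteq> {}"
    using False unfolding F_def by auto
  then have "Min F \<in> F" "Max F \<in> F"
    by simp_all
  then have "Min F \<ge> 1" "Max F \<le> n"
    unfolding F_def by simp_all
  then have span: "real (Max F - Min F) \<le> real n"
    by simp
  have "y (Min F) - y (Max F) \<le> 1"
    unfolding y_def using frac_lt_1[of "real (Min F) * a"] frac_ge_0[of "real (Max F) * a"] by linarith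
  then have "real (Max F - Min F) * (y (Min F) - y (Max F)) \<le> real (Max F - Min F) * 1"
    by (intro mult_left_mono) auto
  then have "c * (real (card F) - 1)\<^sup>2 \<le> real n"
    using chain_card_bound[OF F c gap] span by linarith
  then have "(real (card F) - 1)\<^sup>2 \<le> real n / c"
    using c by (simp add: field_simps)
  then show ?thesis
    unfolding F_def using real_le_rsqrt by fastforce
qed

lemma card_le_card_image_mult:
  fixes f :: "'a \<Rightarrow> 'b" and M :: real
  assumes "finite X" and "\<And>y. real (card {x \<in> X. f x = y}) \<le> M"
  shows "real (card X) \<le> real (card (f ` X)) * M"
proof -
  have "(\<Union>y\<in>f ` X. {x \<in> X. f x = y}) = X"
    by auto
  moreover have "card (\<Union>y\<in>f ` X. {x \<in> X. f x = y}) \<le> (\<Sum>y\<in>f ` X. card {x \<in> X. f x = y})"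
    using assms(1) by (intro card_UN_le) simp
  ultimately have "real (card X) \<le> (\<Sum>y\<in>f ` X. real (card {x \<in> X. f x = y}))"
    by (simp only: of_nat_sum[symmetric] of_nat_le_iff)
  also have "\<dots> \<le> (\<Sum>y\<in>f ` X. M)"
    using assms(2) by (intro sum_mono)
  finally show ?thesis
    by simp
qed

lemma card_A_alpha_inter_ge:
  assumes "c > 0"
    and "\<And>d p. 1 \<le> d \<Longrightarrow> d \<le> n \<Longrightarrow> c / real d \<le> \<bar>real d * a - of_int p\<bar>"
  shows "real n \<le> real (card (A_alpha a \<inter> {1..n})) * (1 + sqrt (real n / c))"
proof -
  have "B_alpha a ` {1..n} \<subseteq> A_alpha a \<inter> {1..n}"
    unfolding A_alpha_def using B_alpha_bounds by fastforce
  then have "card (B_alpha a ` {1..n}) \<le> card (A_alpha a \<inter> {1..n})"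
    by (intro card_mono) auto
  then have "real (card (B_alpha a ` {1..n})) * (1 + sqrt (real n / c))
      \<le> real (card (A_alpha a \<inter> {1..n})) * (1 + sqrt (real n / c))"
    using \<open>c > 0\<close> by (intro mult_right_mono) auto
  moreover have "real (card {1..n}) \<le> real (card (B_alpha a ` {1..n})) * (1 + sqrt (real n / c))"
    using card_B_alpha_fibre_le[OF assms] by (intro card_le_card_image_mult) auto
  ultimately show ?thesis
    by simp
qed

lemma card_A_alpha_inter_ge_sqrt:
  assumes K: "K > 0" and n: "n \<ge> 3" "K * real n \<ge> 1"
    and approx: "\<And>d p. 1 \<le> d \<Longrightarrow> d \<le> n \<Longrightarrow> 1 / (K * real d * ln (real n)) \<le> \<bar>real d * a - of_int p\<bar>"
  shows "1 / (2 * sqrt K) * sqrt (real n / ln (real n)) \<le> real (card (A_alpha a \<inter> {1..n}))"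
proof -
  define L where "L = ln (real n)"
  define S where "S = sqrt K * sqrt (real n * L)"
  have L: "L \<ge> 1"
    unfolding L_def using ln_ge_1_of_ge_3[OF n(1)] .
  have "sqrt (real n / (1 / (K * L))) = S"
    unfolding S_def by (simp add: real_sqrt_mult[symmetric] algebra_simps)
  moreover have "1 \<le> S"
  proof -
    have "1 * 1 \<le> K * real n * L"
      using n(2) L by (intro mult_mono) auto
    then show ?thesis
      unfolding S_def real_sqrt_mult[symmetric] by (simp add: mult.assoc)
  qed
  moreover have "real n \<le> real (card (A_alpha a \<inter> {1..n})) * (1 + sqrt (real n / (1 / (K * L))))"
    using K L approx by (intro card_A_alpha_inter_ge) (auto simp: L_def field_simps)
  ultimately have "real n \<le> real (card (A_alpha a \<inter> {1..n})) * (2 * S)"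
    by (smt (verit) mult_left_mono of_nat_0_le_iff)
  then have "real n / (2 * S) \<le> real (card (A_alpha a \<inter> {1..n}))"
    using \<open>1 \<le> S\<close> by (simp add: divide_le_eq)
  moreover have "real n / (2 * S) = 1 / (2 * sqrt K) * sqrt (real n / L)"
    using K L n(1) unfolding S_def by (simp add: real_sqrt_mult real_sqrt_divide field_simps)
  ultimately show ?thesis
    unfolding L_def by simp
qed

theorem mainTheorem18:
  fixes \<alpha> :: real
  assumes "\<alpha> \<notin> \<rat>"
    and "pq_bounded_in_average \<alpha>"
  shows "\<exists>c>0. \<forall>\<^sub>F n in sequentially.
           real (card (A_alpha \<alpha> \<inter> {1..n})) \<ge> c * sqrt (real n / ln (real n))"
proof -
  obtain K where K: "K > 0" and approx: "\<forall>n d p. 3 \<le> n \<longrightarrow> 1 \<le> d \<longrightarrow> d \<le> n \<longrightarrow>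
      1 / (K * real d * ln (real n)) \<le> \<bar>real d * \<alpha> - of_int p\<bar>"
    using pq_bounded_in_average_imp_approx_lower_bound[OF assms] by blast
  have "\<forall>\<^sub>F n in sequentially. n \<ge> max 3 (nat \<lceil>1 / K\<rceil>)"
    by (rule eventually_ge_at_top)
  then have "\<forall>\<^sub>F n in sequentially.
      1 / (2 * sqrt K) * sqrt (real n / ln (real n)) \<le> real (card (A_alpha \<alpha> \<inter> {1..n}))"
  proof eventually_elim
    case (elim n)
    then have "1 / K \<le> real n"
      using real_nat_ceiling_ge[of "1 / K"] by linarith
    then have "K * real n \<ge> 1"
      using K by (simp add: field_simps)
    with elim K approx show ?case
      by (intro card_A_alpha_inter_ge_sqrt) auto
  qed
  moreover have "1 / (2 * sqrt K) > 0"
    using K by simp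
  ultimately show ?thesis
    by blast
qed

end
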